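(* Let $\psi,\phi$ be full QBFs and $X$ a finite set of propositional variables. Let $p \in \mathrm{var}(\psi)\setminus \mathrm{free}(\phi)$ be such that no occurrence of $p$ in $\psi$ lies in the scope of a quantifier of $\psi$. Let $Y\subseteq \mathrm{var}(\psi)\setminus \mathrm{var}(\phi)$. Let $X^- = \{x^- : x \in X\}$ and $X^+ = \{x^+ : x \in X\}$ be sets of fresh variables (pairwise distinct and not occurring in $\psi$, $\phi$, $X$, $Y$), and let $\sigma = \{x/x^+ : x \in X\}$. Then $$\exists Y \left(\psi[p/\exists X \phi]\right) \equiv \forall X^-\;\exists (Y \cup X^+ \cup \{p\}) \Big( \psi \land (p \leftrightarrow \phi[\sigma]) \land \bigwedge_{x \in X}\big(\lnot p \rightarrow (x^+ \leftrightarrow x^-)\big) \Big)$$ and $$\exists Y \left(\psi[p/\forall X \phi]\right) \equiv \forall X^-\;\exists (Y \cup X^+ \cup \{p\}) \Big( \psi \land (p \leftrightarrow \phi[\sigma]) \land \bigwedge_{x \in X}\big(p \rightarrow (x^+ \leftrightarrow x^-)\big) \Big).$$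
   Context: Fix a countably infinite set $\mathbb{P}$ of propositional variables and a set of boolean operators, each $k$-ary operator $f^k$ ($k\ge 0$) interpreted by a boolean function $\{0,1\}^k\to\{0,1\}$, containing $\bot,\lnot,\land,\rightarrow,\leftrightarrow$. Full QBFs: the smallest set containing every $p\in\mathbb{P}$, closed under $f^k(\phi_1,\ldots,\phi_k)$ and under $\exists X\phi$, $\forall X\phi$ for finite (possibly empty) $X\subseteq\mathbb{P}$. A valuation $V:\mathbb{P}\to\{0,1\}$ is extended by applying the boolean functions, with $V(\exists X\phi)=1$ iff $V'(\phi)=1$ for some $V'$ agreeing with $V$ on $\mathbb{P}\setminus X$, and $V(\forall X\phi)=1$ iff $V'(\phi)=1$ for all such $V'$. $\phi\equiv\psi$ means $V(\phi)=V(\psi)$ for every valuation $V$. $\mathrm{var}(\phi)$ is the set of variables occurring in $\phi$, $\mathrm{free}(\phi)$ the set of its free variables. $\phi[\sigma]$ for a substitution $\sigma=\{p_1/\phi_1,\ldots,p_k/\phi_k\}$ (distinct $p_i$) simultaneously replaces all free occurrences of each $p_i$ by $\phi_i$. An empty conjunction is $\top$. *)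

theory Defs
  imports Main
begin

text \<open>Full QBFs over the countably infinite set of propositional variables nat.
  A k-ary operator is represented by its interpreting boolean function on the
  list of argument values.\<close>

datatype qbf =
    Var nat
  | Op "bool list \<Rightarrow> bool" "qbf list"
  | Ex "nat set" qbf
  | All "nat set" qbf

text \<open>Full QBFs: all quantified variable sets are finite.\<close>
fun wf :: "qbf \<Rightarrow> bool" where
  "wf (Var p) = True"
| "wf (Op f args) = (\<forall>a\<in>set args. wf a)"
| "wf (Ex X \<phi>) = (finite X \<and> wf \<phi>)"
| "wf (All X \<phi>) = (finite X \<and> wf \<phi>)"

fun eval :: "(nat \<Rightarrow> bool) \<Rightarrow> qbf \<Rightarrow> bool" where
  "eval V (Var p) = V p"
| "eval V (Op f args) = f (map (eval V) args)"
| "eval V (Ex X \<phi>) = (\<exists>V'. (\<forall>q. q \<notin> X \<longrightarrow> V' q = V q) \<and> eval V' \<phi>)"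
| "eval V (All X \<phi>) = (\<forall>V'. (\<forall>q. q \<notin> X \<longrightarrow> V' q = V q) \<longrightarrow> eval V' \<phi>)"

definition qequiv :: "qbf \<Rightarrow> qbf \<Rightarrow> bool" (infix "\<equiv>\<^sub>Q" 50) where
  "\<phi> \<equiv>\<^sub>Q \<psi> \<longleftrightarrow> (\<forall>V. eval V \<phi> = eval V \<psi>)"

fun var :: "qbf \<Rightarrow> nat set" where
  "var (Var p) = {p}"
| "var (Op f args) = (\<Union>a\<in>set args. var a)"
| "var (Ex X \<phi>) = X \<union> var \<phi>"
| "var (All X \<phi>) = X \<union> var \<phi>"

fun free :: "qbf \<Rightarrow> nat set" where
  "free (Var p) = {p}"
| "free (Op f args) = (\<Union>a\<in>set args. free a)"
| "free (Ex X \<phi>) = free \<phi> - X"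
| "free (All X \<phi>) = free \<phi> - X"

text \<open>Simultaneous substitution of free occurrences (no renaming).
  A substitution is a map nat => qbf; variables outside its domain map to Var.\<close>
fun subst :: "qbf \<Rightarrow> (nat \<Rightarrow> qbf) \<Rightarrow> qbf" where
  "subst (Var p) \<sigma> = \<sigma> p"
| "subst (Op f args) \<sigma> = Op f (map (\<lambda>a. subst a \<sigma>) args)"
| "subst (Ex X \<phi>) \<sigma> = Ex X (subst \<phi> (\<lambda>q. if q \<in> X then Var q else \<sigma> q))"
| "subst (All X \<phi>) \<sigma> = All X (subst \<phi> (\<lambda>q. if q \<in> X then Var q else \<sigma> q))"

definition subst1 :: "nat \<Rightarrow> qbf \<Rightarrow> nat \<Rightarrow> qbf" where
  "subst1 p \<chi> = (\<lambda>q. if q = p then \<chi> else Var q)"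

text \<open>No occurrence of p lies in the scope of a quantifier.\<close>
fun unquantified :: "nat \<Rightarrow> qbf \<Rightarrow> bool" where
  "unquantified p (Var q) = True"
| "unquantified p (Op f args) = (\<forall>a\<in>set args. unquantified p a)"
| "unquantified p (Ex X \<phi>) = (p \<notin> var (Ex X \<phi>))"
| "unquantified p (All X \<phi>) = (p \<notin> var (All X \<phi>))"

definition Bot :: qbf where "Bot = Op (\<lambda>_. False) []"
definition Neg :: "qbf \<Rightarrow> qbf" where "Neg a = Op (\<lambda>bs. \<not> bs ! 0) [a]"
definition And :: "qbf \<Rightarrow> qbf \<Rightarrow> qbf" where "And a b = Op (\<lambda>bs. bs ! 0 \<and> bs ! 1) [a, b]"
definition Imp :: "qbf \<Rightarrow> qbf \<Rightarrow> qbf" where "Imp a b = Op (\<lambda>bs. bs ! 0 \<longrightarrow> bs ! 1) [a, b]"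
definition Iff :: "qbf \<Rightarrow> qbf \<Rightarrow> qbf" where "Iff a b = Op (\<lambda>bs. bs ! 0 \<longleftrightarrow> bs ! 1) [a, b]"
definition Top :: qbf where "Top = Neg Bot"

fun Conj :: "qbf list \<Rightarrow> qbf" where
  "Conj [] = Top"
| "Conj [a] = a"
| "Conj (a # as) = And a (Conj as)"

definition BigConj :: "nat set \<Rightarrow> (nat \<Rightarrow> qbf) \<Rightarrow> qbf" where
  "BigConj X F = Conj (map F (sorted_list_of_set X))"

end

theory Submission
  imports Defs
begin

text \<open>Fix a valuation and let A b say that \<psi>, with p set to b, holds for some values of Y.
  Both left-hand sides evaluate to A applied to the value of the quantified formula. On the
  right-hand side, the copies xp x hold a candidate assignment g to X with p \<longleftrightarrow> \<phi>[X := g],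
  and the universally chosen copies xm x form a default that g must follow whenever the
  guard is active. For \<exists>X \<phi>: if it is true, the opponent can pick a satisfying default, so p
  cannot be false; if it is false, p = \<phi>[X := g] is false for every g. Dually for \<forall>X \<phi>.\<close>

lemma override_on_eq_self_iff: "override_on f g A = g \<longleftrightarrow> (\<forall>a. a \<notin> A \<longrightarrow> g a = f a)"
  by (auto simp: override_on_def fun_eq_iff)

lemma override_on_override_on_same: "override_on f (override_on f g A) A = override_on f g A"
  by (simp add: override_on_def fun_eq_iff)

lemma override_on_cong: "(\<And>a. a \<in> A \<Longrightarrow> g a = g' a) \<Longrightarrow> override_on f g A = override_on f g' A"
  by (simp add: override_on_def fun_eq_iff)

lemma ex_override_on_fixed_iff: "(\<exists>g. override_on f g A = g \<and> P g) \<longleftrightarrow> (\<exists>g. P (override_on f g A))"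
  by (metis override_on_override_on_same)

lemma all_override_on_fixed_iff: "(\<forall>g. override_on f g A = g \<longrightarrow> P g) \<longleftrightarrow> (\<forall>g. P (override_on f g A))"
  by (metis override_on_override_on_same)

lemma free_subset_var: "free \<phi> \<subseteq> var \<phi>"
  by (induction \<phi>) auto

lemma eval_Ex_override_on: "eval V (Ex X \<phi>) = (\<exists>U. eval (override_on V U X) \<phi>)"
proof -
  have "eval V (Ex X \<phi>) = (\<exists>V'. override_on V V' X = V' \<and> eval V' \<phi>)"
    by (simp add: override_on_eq_self_iff)
  also have "\<dots> = (\<exists>U. eval (override_on V U X) \<phi>)"
    by (rule ex_override_on_fixed_iff)
  finally show ?thesis .
qed

lemma eval_All_override_on: "eval V (All X \<phi>) = (\<forall>U. eval (override_on V U X) \<phi>)"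
proof -
  have "eval V (All X \<phi>) = (\<forall>V'. override_on V V' X = V' \<longrightarrow> eval V' \<phi>)"
    by (simp add: override_on_eq_self_iff)
  also have "\<dots> = (\<forall>U. eval (override_on V U X) \<phi>)"
    by (rule all_override_on_fixed_iff)
  finally show ?thesis .
qed

lemma eval_cong: "(\<And>q. q \<in> free \<phi> \<Longrightarrow> V q = V' q) \<Longrightarrow> eval V \<phi> = eval V' \<phi>"
proof (induction \<phi> arbitrary: V V')
  case (Op f args)
  have "eval V a = eval V' a" if "a \<in> set args" for a
    by (rule Op.IH[OF that]) (use that Op.prems in auto)
  then show ?case by (simp cong: map_cong)
next
  case (Ex X \<phi>)
  then show ?case
    unfolding eval_Ex_override_on by (intro ex_cong1 Ex.IH) (simp add: override_on_def)
next
  case (All X \<phi>)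
  then show ?case
    unfolding eval_All_override_on by (intro all_cong1 All.IH) (simp add: override_on_def)
qed simp

lemma subst_id: "(\<And>q. q \<in> free \<phi> \<Longrightarrow> \<sigma> q = Var q) \<Longrightarrow> subst \<phi> \<sigma> = \<phi>"
  by (induction \<phi> arbitrary: \<sigma>) (auto intro!: map_idI)

lemma eval_subst_binder:
  assumes IH: "\<And>V \<tau>. (\<And>q. q \<in> free \<phi> \<Longrightarrow> \<tau> q = Var q \<or> free (\<tau> q) \<inter> var \<phi> = {}) \<Longrightarrow>
      eval V (subst \<phi> \<tau>) = eval (\<lambda>q. eval V (\<tau> q)) \<phi>"
    and \<sigma>: "\<And>q. q \<in> free \<phi> - X \<Longrightarrow> \<sigma> q = Var q \<or> free (\<sigma> q) \<inter> (X \<union> var \<phi>) = {}"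
  shows "eval (override_on V U X) (subst \<phi> (\<lambda>q. if q \<in> X then Var q else \<sigma> q)) =
    eval (override_on (\<lambda>q. eval V (\<sigma> q)) U X) \<phi>"
proof -
  have "eval (override_on V U X) (subst \<phi> (\<lambda>q. if q \<in> X then Var q else \<sigma> q)) =
      eval (\<lambda>q. eval (override_on V U X) (if q \<in> X then Var q else \<sigma> q)) \<phi>"
    by (rule IH) (use \<sigma> in auto)
  also have "\<dots> = eval (override_on (\<lambda>q. eval V (\<sigma> q)) U X) \<phi>"
  proof (rule eval_cong)
    fix q assume "q \<in> free \<phi>"
    show "eval (override_on V U X) (if q \<in> X then Var q else \<sigma> q) =
        override_on (\<lambda>q. eval V (\<sigma> q)) U X q"
    proof (cases "q \<in> X")
      case False
      have "\<sigma> q = Var q \<or> free (\<sigma> q) \<inter> (X \<union> var \<phi>) = {}"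
        using \<sigma> \<open>q \<in> free \<phi>\<close> False by blast
      then have "eval (override_on V U X) (\<sigma> q) = eval V (\<sigma> q)"
      proof (elim disjE)
        assume "free (\<sigma> q) \<inter> (X \<union> var \<phi>) = {}"
        then show ?thesis by (intro eval_cong override_on_apply_notin) blast
      qed (use False in simp)
      then show ?thesis using False by simp
    qed simp
  qed
  finally show ?thesis .
qed

lemma eval_subst:
  "(\<And>q. q \<in> free \<phi> \<Longrightarrow> \<sigma> q = Var q \<or> free (\<sigma> q) \<inter> var \<phi> = {}) \<Longrightarrow>
   eval V (subst \<phi> \<sigma>) = eval (\<lambda>q. eval V (\<sigma> q)) \<phi>"
proof (induction \<phi> arbitrary: V \<sigma>)
  case (Op f args)
  have "eval V (subst a \<sigma>) = eval (\<lambda>q. eval V (\<sigma> q)) a" if "a \<in> set args" for a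
    using that Op.prems by (intro Op.IH) auto
  then show ?case by (simp cong: map_cong)
next
  case (Ex X \<phi>)
  then show ?case
    unfolding subst.simps eval_Ex_override_on
    by (intro ex_cong1 eval_subst_binder) auto
next
  case (All X \<phi>)
  then show ?case
    unfolding subst.simps eval_All_override_on
    by (intro all_cong1 eval_subst_binder) auto
qed simp

lemma eval_fun_upd_notin_free: "p \<notin> free \<phi> \<Longrightarrow> eval (V(p := b)) \<phi> = eval V \<phi>"
  by (rule eval_cong, rule fun_upd_other) blast

lemma subst_subst1_notin_free: "p \<notin> free \<phi> \<Longrightarrow> subst \<phi> (subst1 p \<chi>) = \<phi>"
  by (rule subst_id) (auto simp: subst1_def)

lemma eval_subst1_unquantified:
  "unquantified p \<psi> \<Longrightarrow> eval V (subst \<psi> (subst1 p \<chi>)) = eval (V(p := eval V \<chi>)) \<psi>"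
proof (induction \<psi> arbitrary: V)
  case (Op f args)
  have "eval V (subst a (subst1 p \<chi>)) = eval (V(p := eval V \<chi>)) a" if "a \<in> set args" for a
    using that Op.prems by (intro Op.IH) auto
  then have "map (\<lambda>a. eval V (subst a (subst1 p \<chi>))) args = map (eval (V(p := eval V \<chi>))) args"
    by (rule map_cong[OF refl])
  then show ?case by (simp only: subst.simps eval.simps map_map comp_def)
next
  case (Ex X \<phi>)
  then have "p \<notin> free (Ex X \<phi>)"
    using free_subset_var by fastforce
  then show ?case by (simp only: subst_subst1_notin_free eval_fun_upd_notin_free not_False_eq_True)
next
  case (All X \<phi>)
  then have "p \<notin> free (All X \<phi>)"
    using free_subset_var by fastforce
  then show ?case by (simp only: subst_subst1_notin_free eval_fun_upd_notin_free not_False_eq_True)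
qed (simp add: subst1_def)

lemma eval_And [simp]: "eval V (And a b) \<longleftrightarrow> eval V a \<and> eval V b"
  and eval_Iff [simp]: "eval V (Iff a b) \<longleftrightarrow> (eval V a \<longleftrightarrow> eval V b)"
  and eval_Imp [simp]: "eval V (Imp a b) \<longleftrightarrow> (eval V a \<longrightarrow> eval V b)"
  and eval_Neg [simp]: "eval V (Neg a) \<longleftrightarrow> \<not> eval V a"
  by (simp_all add: And_def Iff_def Imp_def Neg_def)

lemma eval_Conj [simp]: "eval V (Conj as) \<longleftrightarrow> (\<forall>a\<in>set as. eval V a)"
  by (induction as rule: Conj.induct) (simp_all add: Top_def Bot_def)

lemma eval_BigConj [simp]: "finite X \<Longrightarrow> eval V (BigConj X F) \<longleftrightarrow> (\<forall>x\<in>X. eval V (F x))"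
  by (simp add: BigConj_def)

lemma eval_rename:
  assumes "r ` X \<inter> var \<phi> = {}"
  shows "eval V (subst \<phi> (\<lambda>q. if q \<in> X then Var (r q) else Var q)) =
    eval (override_on V (V \<circ> r) X) \<phi>"
proof -
  have "(\<lambda>q. eval V (if q \<in> X then Var (r q) else Var q)) = override_on V (V \<circ> r) X"
    by (simp add: override_on_def fun_eq_iff)
  then show ?thesis
    using assms by (subst eval_subst) auto
qed

text \<open>In the application, b is the value of p, g the assignment held by the copies xp x and
  h the one held by the copies xm x.\<close>

lemma ex_guarded_copy_iff:
  assumes "\<And>g. \<exists>h. R g h" and "\<And>h. \<exists>g. R g h"
    and "\<And>g g' h. R g h \<Longrightarrow> R g' h \<Longrightarrow> P g = P g'"
  shows "(\<forall>h. \<exists>b. A b \<and> (\<exists>g. b = P g \<and> (\<not> b \<longrightarrow> R g h))) \<longleftrightarrow> A (\<exists>g. P g)"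
proof (cases "\<exists>g. P g")
  case True
  then obtain g0 where "P g0" ..
  obtain h0 where "R g0 h0"
    using assms(1) by blast
  have "A True" if "\<forall>h. \<exists>b. A b \<and> (\<exists>g. b = P g \<and> (\<not> b \<longrightarrow> R g h))"
  proof -
    from that obtain b g where "A b" "b = P g" "\<not> b \<longrightarrow> R g h0"
      by blast
    with \<open>R g0 h0\<close> \<open>P g0\<close> assms(3) have b
      by blast
    with \<open>A b\<close> show ?thesis by simp
  qed
  moreover have "A True \<Longrightarrow> \<exists>b. A b \<and> (\<exists>g. b = P g \<and> (\<not> b \<longrightarrow> R g h))" for h
    using \<open>P g0\<close> by blast
  ultimately show ?thesis
    using True by auto
next
  case False
  have "(\<exists>b. A b \<and> (\<exists>g. b = P g \<and> (\<not> b \<longrightarrow> R g h))) \<longleftrightarrow> A False" for h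
  proof
    assume "\<exists>b. A b \<and> (\<exists>g. b = P g \<and> (\<not> b \<longrightarrow> R g h))"
    with False show "A False" by auto
  next
    assume "A False"
    obtain g where "R g h"
      using assms(2) by blast
    with False \<open>A False\<close> show "\<exists>b. A b \<and> (\<exists>g. b = P g \<and> (\<not> b \<longrightarrow> R g h))"
      by auto
  qed
  then show ?thesis
    using False by simp
qed

lemma all_guarded_copy_iff:
  assumes "\<And>g. \<exists>h. R g h" and "\<And>h. \<exists>g. R g h"
    and "\<And>g g' h. R g h \<Longrightarrow> R g' h \<Longrightarrow> P g = P g'"
  shows "(\<forall>h. \<exists>b. A b \<and> (\<exists>g. b = P g \<and> (b \<longrightarrow> R g h))) \<longleftrightarrow> A (\<forall>g. P g)"
proof -
  have "(\<exists>b. A b \<and> (\<exists>g. b = P g \<and> (b \<longrightarrow> R g h))) \<longleftrightarrow>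
      (\<exists>b. A (\<not> b) \<and> (\<exists>g. b = (\<not> P g) \<and> (\<not> b \<longrightarrow> R g h)))" for h
    unfolding ex_bool_eq by auto
  moreover have "(\<forall>h. \<exists>b. A (\<not> b) \<and> (\<exists>g. b = (\<not> P g) \<and> (\<not> b \<longrightarrow> R g h))) \<longleftrightarrow>
      A (\<not> (\<exists>g. \<not> P g))"
    using assms by (intro ex_guarded_copy_iff) blast+
  ultimately show ?thesis by simp
qed

locale quantifier_extraction =
  fixes \<psi> \<phi> :: qbf and X Y :: "nat set" and p :: nat and xm xp :: "nat \<Rightarrow> nat"
  assumes finite_X: "finite X"
    and p_in: "p \<in> var \<psi> - free \<phi>"
    and unquantified_p: "unquantified p \<psi>"
    and Y_subset: "Y \<subseteq> var \<psi> - var \<phi>"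
    and inj_xm: "inj_on xm X" and inj_xp: "inj_on xp X"
    and xm_xp_disjoint: "xm ` X \<inter> xp ` X = {}"
    and xm_fresh: "xm ` X \<inter> (var \<psi> \<union> var \<phi> \<union> X \<union> Y) = {}"
    and xp_fresh: "xp ` X \<inter> (var \<psi> \<union> var \<phi> \<union> X \<union> Y) = {}"
begin

lemma eval_Ex_subst1:
  assumes "free \<chi> \<inter> Y = {}"
  shows "eval V (Ex Y (subst \<psi> (subst1 p \<chi>))) \<longleftrightarrow>
    (\<exists>U. eval ((override_on V U Y)(p := eval V \<chi>)) \<psi>)"
proof -
  have "eval (override_on V U Y) \<chi> = eval V \<chi>" for U
    by (rule eval_cong, rule override_on_apply_notin) (use assms in blast)
  then show ?thesis
    unfolding eval_Ex_override_on eval_subst1_unquantified[OF unquantified_p] by simp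
qed

lemma eval_extraction_body:
  fixes V H G :: "nat \<Rightarrow> bool"
  assumes guard: "\<And>W a. eval W (guard a) \<longleftrightarrow> c (eval W a)"
  defines "W \<equiv> override_on (override_on V H (xm ` X)) G (Y \<union> xp ` X \<union> {p})"
  shows "eval W (Conj [\<psi>, Iff (Var p) (subst \<phi> (\<lambda>q. if q \<in> X then Var (xp q) else Var q)),
      BigConj X (\<lambda>x. Imp (guard (Var p)) (Iff (Var (xp x)) (Var (xm x))))]) \<longleftrightarrow>
    eval ((override_on V G Y)(p := G p)) \<psi> \<and>
    G p = eval (override_on V (G \<circ> xp) X) \<phi> \<and>
    (c (G p) \<longrightarrow> (\<forall>x\<in>X. G (xp x) = H (xm x)))"
proof -
  have W_p: "W p = G p"
    by (simp add: W_def)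
  have "eval W \<psi> = eval ((override_on V G Y)(p := G p)) \<psi>"
  proof (rule eval_cong)
    fix q assume "q \<in> free \<psi>"
    then have "q \<notin> xm ` X" "q \<notin> xp ` X"
      using free_subset_var xm_fresh xp_fresh by blast+
    then show "W q = ((override_on V G Y)(p := G p)) q"
      by (simp add: W_def override_on_def)
  qed
  moreover have "eval (override_on W (W \<circ> xp) X) \<phi> = eval (override_on V (G \<circ> xp) X) \<phi>"
  proof (rule eval_cong)
    fix q assume "q \<in> free \<phi>"
    then have "q \<notin> xm ` X" "q \<notin> xp ` X" "q \<notin> Y" "q \<noteq> p"
      using free_subset_var xm_fresh xp_fresh Y_subset p_in by blast+
    then show "override_on W (W \<circ> xp) X q = override_on V (G \<circ> xp) X q"
      by (simp add: W_def override_on_def)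
  qed
  moreover have "W (xp x) = G (xp x)" "W (xm x) = H (xm x)" if "x \<in> X" for x
    using that xm_xp_disjoint xm_fresh p_in by (auto simp: W_def override_on_def)
  moreover have "xp ` X \<inter> var \<phi> = {}"
    using xp_fresh by blast
  ultimately show ?thesis
    by (simp add: guard finite_X eval_rename W_p)
qed

lemma ex_valuation_split:
  "(\<exists>G. eval ((override_on V G Y)(p := G p)) \<psi> \<and> G p = eval (override_on V (G \<circ> xp) X) \<phi> \<and>
      (c (G p) \<longrightarrow> (\<forall>x\<in>X. G (xp x) = H (xm x)))) \<longleftrightarrow>
   (\<exists>b. (\<exists>U. eval ((override_on V U Y)(p := b)) \<psi>) \<and>
      (\<exists>g. b = eval (override_on V g X) \<phi> \<and> (c b \<longrightarrow> (\<forall>x\<in>X. g x = H (xm x)))))"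
  (is "(\<exists>G. ?split G) \<longleftrightarrow> (\<exists>b. ?A b \<and> (\<exists>g. ?S b g))")
proof
  assume "\<exists>G. ?split G"
  then obtain G where "?split G" ..
  then have "?A (G p)" and "?S (G p) (G \<circ> xp)"
    by auto
  then show "\<exists>b. ?A b \<and> (\<exists>g. ?S b g)"
    by blast
next
  assume "\<exists>b. ?A b \<and> (\<exists>g. ?S b g)"
  then obtain b U g where U: "eval ((override_on V U Y)(p := b)) \<psi>" and g: "?S b g"
    by blast
  define G where "G = (override_on U (\<lambda>q. g (inv_into X xp q)) (xp ` X))(p := b)"
  have G_xp: "G (xp x) = g x" if "x \<in> X" for x
  proof -
    have "xp x \<noteq> p"
      using that p_in xp_fresh by blast
    then show ?thesis
      using that inv_into_f_f[OF inj_xp] by (simp add: G_def)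
  qed
  have G_p: "G p = b"
    by (simp add: G_def)
  have G_Y: "G q = U q" if "q \<in> Y" "q \<noteq> p" for q
  proof -
    have "q \<notin> xp ` X"
      using that xp_fresh by blast
    then show ?thesis
      using that by (simp add: G_def)
  qed
  have "(override_on V G Y)(p := b) = (override_on V U Y)(p := b)"
  proof
    fix q
    show "((override_on V G Y)(p := b)) q = ((override_on V U Y)(p := b)) q"
      using G_Y by (cases "q = p") (simp_all add: override_on_def)
  qed
  moreover have "override_on V (G \<circ> xp) X = override_on V g X"
    by (rule override_on_cong) (simp add: G_xp)
  ultimately have "?split G"
    using U g G_xp G_p by simp
  then show "\<exists>G. ?split G"
    by blast
qed

lemma eval_extraction_rhs:
  assumes guard: "\<And>W a. eval W (guard a) \<longleftrightarrow> c (eval W a)"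
  shows "eval V (All (xm ` X) (Ex (Y \<union> xp ` X \<union> {p})
      (Conj [\<psi>, Iff (Var p) (subst \<phi> (\<lambda>q. if q \<in> X then Var (xp q) else Var q)),
        BigConj X (\<lambda>x. Imp (guard (Var p)) (Iff (Var (xp x)) (Var (xm x))))]))) \<longleftrightarrow>
    (\<forall>H. \<exists>b. (\<exists>U. eval ((override_on V U Y)(p := b)) \<psi>) \<and>
      (\<exists>g. b = eval (override_on V g X) \<phi> \<and> (c b \<longrightarrow> (\<forall>x\<in>X. g x = H (xm x)))))"
  unfolding eval_All_override_on eval_Ex_override_on eval_extraction_body[OF guard] ex_valuation_split ..

lemma copy_exists: "\<exists>h. \<forall>x\<in>X. g x = h (xm x)"
  using inv_into_f_f[OF inj_xm] by (intro exI[of _ "\<lambda>q. g (inv_into X xm q)"]) simp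

lemma copy_determines_eval:
  assumes "\<forall>x\<in>X. g x = h (xm x)" and "\<forall>x\<in>X. g' x = h (xm x)"
  shows "eval (override_on V g X) \<phi> = eval (override_on V g' X) \<phi>"
proof -
  have "override_on V g X = override_on V g' X"
    by (rule override_on_cong) (use assms in simp)
  then show ?thesis by simp
qed

lemma free_quantifier_disjoint_Y: "free (Ex X \<phi>) \<inter> Y = {}" "free (All X \<phi>) \<inter> Y = {}"
  using Y_subset free_subset_var[of \<phi>] by auto

theorem Ex_extraction:
  "Ex Y (subst \<psi> (subst1 p (Ex X \<phi>))) \<equiv>\<^sub>Q
     All (xm ` X) (Ex (Y \<union> xp ` X \<union> {p})
       (Conj [\<psi>, Iff (Var p) (subst \<phi> (\<lambda>q. if q \<in> X then Var (xp q) else Var q)),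
              BigConj X (\<lambda>x. Imp (Neg (Var p)) (Iff (Var (xp x)) (Var (xm x))))]))"
  unfolding qequiv_def eval_extraction_rhs[where guard = Neg and c = Not, OF eval_Neg]
    eval_Ex_subst1[OF free_quantifier_disjoint_Y(1)] eval_Ex_override_on[of _ X \<phi>]
proof (intro allI ex_guarded_copy_iff[symmetric])
  show "\<exists>g. \<forall>x\<in>X. g x = h (xm x)" for h
    by (rule exI[of _ "\<lambda>x. h (xm x)"]) simp
qed (fact copy_exists, fact copy_determines_eval)

theorem All_extraction:
  "Ex Y (subst \<psi> (subst1 p (All X \<phi>))) \<equiv>\<^sub>Q
     All (xm ` X) (Ex (Y \<union> xp ` X \<union> {p})
       (Conj [\<psi>, Iff (Var p) (subst \<phi> (\<lambda>q. if q \<in> X then Var (xp q) else Var q)),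
              BigConj X (\<lambda>x. Imp (Var p) (Iff (Var (xp x)) (Var (xm x))))]))"
  unfolding qequiv_def eval_extraction_rhs[where guard = "\<lambda>a. a" and c = "\<lambda>b. b", OF refl]
    eval_Ex_subst1[OF free_quantifier_disjoint_Y(2)] eval_All_override_on[of _ X \<phi>]
proof (intro allI all_guarded_copy_iff[symmetric])
  show "\<exists>g. \<forall>x\<in>X. g x = h (xm x)" for h
    by (rule exI[of _ "\<lambda>x. h (xm x)"]) simp
qed (fact copy_exists, fact copy_determines_eval)

end

theorem lemma1:
  fixes \<psi> \<phi> :: qbf and X Y :: "nat set" and p :: nat
    and xm xp :: "nat \<Rightarrow> nat"
  assumes "wf \<psi>" and "wf \<phi>" and "finite X"
    and "p \<in> var \<psi> - free \<phi>"
    and "unquantified p \<psi>"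
    and "Y \<subseteq> var \<psi> - var \<phi>"
    and "inj_on xm X" and "inj_on xp X" and "xm ` X \<inter> xp ` X = {}"
    and "xm ` X \<inter> (var \<psi> \<union> var \<phi> \<union> X \<union> Y) = {}"
    and "xp ` X \<inter> (var \<psi> \<union> var \<phi> \<union> X \<union> Y) = {}"
  defines "\<sigma> \<equiv> (\<lambda>q. if q \<in> X then Var (xp q) else Var q)"
  shows "(Ex Y (subst \<psi> (subst1 p (Ex X \<phi>))) \<equiv>\<^sub>Q
           All (xm ` X) (Ex (Y \<union> xp ` X \<union> {p})
             (Conj [\<psi>, Iff (Var p) (subst \<phi> \<sigma>),
                    BigConj X (\<lambda>x. Imp (Neg (Var p)) (Iff (Var (xp x)) (Var (xm x))))]))) \<and>
         (Ex Y (subst \<psi> (subst1 p (All X \<phi>))) \<equiv>\<^sub>Q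
           All (xm ` X) (Ex (Y \<union> xp ` X \<union> {p})
             (Conj [\<psi>, Iff (Var p) (subst \<phi> \<sigma>),
                    BigConj X (\<lambda>x. Imp (Var p) (Iff (Var (xp x)) (Var (xm x))))])))"
proof -
  interpret quantifier_extraction \<psi> \<phi> X Y p xm xp
    using assms(3-11) by unfold_locales
  show ?thesis
    unfolding \<sigma>_def using Ex_extraction All_extraction ..
qed

end
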